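(* Let $d\ge3$ and let $\mu,\mu_1,\mu_2,\dots$ be positive $\sigma$-finite measures on $\mathbb R^d$. If for every $x\in\mathbb R^d$, $\liminf_{n\to\infty} g*\mu_n(x)\ge g*\mu(x)$, then $\liminf_{n\to\infty}\mu_n(\mathbb R^d)\ge\mu(\mathbb R^d)$.
   Context: $g(x,y)=g(x-y)=\frac{\Gamma(d/2-1)}{2\pi^{d/2}}|x-y|^{2-d}$ is the Green function of standard Brownian motion in $\mathbb R^d$, and $g*\nu(x):=\int_{\mathbb R^d}g(x,y)\,\nu(dy)$. *)

theory Defs
  imports "HOL-Analysis.Analysis"
begin

text \<open>Green function of standard Brownian motion on R^d (d = DIM('a)):
  g(z) = Gamma(d/2-1)/(2 pi^(d/2)) |z|^(2-d), with g(0) = +infinity.\<close>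
definition green_kernel :: "'a::euclidean_space \<Rightarrow> ennreal" where
  "green_kernel z = (if z = 0 then \<infinity> else
     ennreal (Gamma (real DIM('a) / 2 - 1) / (2 * pi powr (real DIM('a) / 2))
              * norm z powr (2 - real DIM('a))))"

definition green_potential :: "'a::euclidean_space measure \<Rightarrow> 'a \<Rightarrow> ennreal" where
  "green_potential \<nu> x = (\<integral>\<^sup>+ y. green_kernel (x - y) \<partial>\<nu>)"

end

theory Submission
  imports Defs
begin

(* Let U(w) = int_{|u|<1} g(u - w) du be the potential of Lebesgue measure on the unit ball.
   The scaling g(r z) = r^(2-d) g(z) and Fubini give int_{|x|<r} g*nu(x) dx = r^2 int U(y/r) nu(dy).
   As g is radially decreasing, U is maximal at 0, where it is positive and finite, and
   U(0) <= liminf U(y/r) as r -> infinity.  Integrating the hypothesis over the ball of radius r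
   and applying Fatou's lemma gives int U(y/r) mu(dy) <= U(0) liminf mu_n(R^d) for every r;
   letting r -> infinity, Fatou's lemma once more yields U(0) mu(R^d) <= U(0) liminf mu_n(R^d). *)

lemma nn_integral_lborel_affine:
  fixes t :: "'a::euclidean_space"
  assumes [measurable]: "f \<in> borel_measurable borel" and c: "c \<noteq> 0"
  shows "(\<integral>\<^sup>+x. f x \<partial>lborel) = ennreal (\<bar>c\<bar> ^ DIM('a)) * (\<integral>\<^sup>+x. f (t + c *\<^sub>R x) \<partial>lborel)"
  by (subst lborel_affine[OF c, of t])
     (simp add: nn_integral_density nn_integral_distr nn_integral_cmult)

lemma emeasure_Diff_swap:
  assumes "A \<in> sets M" "B \<in> sets M" "emeasure M A = emeasure M B" "emeasure M B < \<infinity>"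
  shows "emeasure M (A - B) = emeasure M (B - A)"
proof -
  have "emeasure M (X \<inter> Y) + emeasure M (X - Y) = emeasure M X"
    if "X \<in> sets M" "Y \<in> sets M" for X Y
    using that by (subst plus_emeasure) (auto simp: Int_Diff_Un)
  then have "emeasure M (A \<inter> B) + emeasure M (A - B) = emeasure M (A \<inter> B) + emeasure M (B - A)"
    using assms by (metis Int_commute)
  moreover have "emeasure M (A \<inter> B) \<noteq> \<infinity>"
    using assms by (metis emeasure_mono inf_le2 le_less_trans sets.Int less_irrefl)
  ultimately show ?thesis
    by (simp add: ennreal_add_left_cancel)
qed

lemma nn_integral_bathtub:
  fixes f :: "'a \<Rightarrow> ennreal"
  assumes [measurable]: "f \<in> borel_measurable M" "A \<in> sets M" "B \<in> sets M"
    and "emeasure M A = emeasure M B" "emeasure M B < \<infinity>"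
    and above: "\<And>z. z \<in> B \<Longrightarrow> k \<le> f z" and below: "\<And>z. z \<notin> B \<Longrightarrow> f z \<le> k"
  shows "(\<integral>\<^sup>+z. indicator A z * f z \<partial>M) \<le> (\<integral>\<^sup>+z. indicator B z * f z \<partial>M)"
proof -
  have split: "(\<integral>\<^sup>+z. indicator X z * f z \<partial>M) =
      (\<integral>\<^sup>+z. indicator (A \<inter> B) z * f z \<partial>M) + (\<integral>\<^sup>+z. indicator (X - Y) z * f z \<partial>M)"
    if "X \<in> sets M" "Y \<in> sets M" "X \<inter> Y = A \<inter> B" for X Y
    using that by (subst nn_integral_add[symmetric]) (auto intro!: nn_integral_cong simp: indicator_def)
  have "(\<integral>\<^sup>+z. indicator (A - B) z * f z \<partial>M) \<le> (\<integral>\<^sup>+z. k * indicator (A - B) z \<partial>M)"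
    by (intro nn_integral_mono) (auto simp: indicator_def below)
  also have "\<dots> = k * emeasure M (B - A)"
    using assms by (subst nn_integral_cmult_indicator) (auto simp: emeasure_Diff_swap)
  also have "\<dots> = (\<integral>\<^sup>+z. k * indicator (B - A) z \<partial>M)"
    by (subst nn_integral_cmult_indicator) auto
  also have "\<dots> \<le> (\<integral>\<^sup>+z. indicator (B - A) z * f z \<partial>M)"
    by (intro nn_integral_mono) (auto simp: indicator_def above)
  finally show ?thesis
    using split[of A B] split[of B A] by (simp add: Int_commute add_left_mono)
qed

lemma Liminf_ennreal_mult_left:
  fixes a :: ennreal
  assumes "a < \<infinity>"
  shows "liminf (\<lambda>n. a * f n) = a * liminf f"
  using Liminf_compose_continuous_mono[of "\<lambda>x. a * x" sequentially f] assms
  by (simp add: ennreal_continuous_on_cmult continuous_on_id mono_def mult_left_mono)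

lemma measurable_pair_sets_borel:
  assumes "sets M = sets borel" "sets N = sets borel" "f \<in> borel_measurable (borel \<Otimes>\<^sub>M borel)"
  shows "f \<in> borel_measurable (M \<Otimes>\<^sub>M N)"
  using assms(3) by (simp add: measurable_cong_sets[OF sets_pair_measure_cong[OF assms(1,2)] refl])

lemma ennreal_le_suminf: "(f :: nat \<Rightarrow> ennreal) k \<le> suminf f"
  using sum_le_suminf[OF summableI, of "{k}" f] by simp

lemma exists_dyadic_interval:
  fixes t :: real
  assumes "0 < t" "t < 1"
  obtains k where "(1/2) ^ Suc k \<le> t" "t < (1/2) ^ k"
proof -
  obtain n where "(1/2::real) ^ n < t"
    using real_arch_pow_inv[of t "1/2"] assms by auto
  then have "\<exists>k<n. (\<forall>i\<le>k. \<not> (1/2::real) ^ i \<le> t) \<and> (1/2) ^ Suc k \<le> t"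
    using assms by (intro ex_least_nat_less) auto
  then show ?thesis
    using that by force
qed

lemma dyadic_power_product:
  assumes "d \<ge> 2"
  shows "((1/2::real) ^ Suc k) powr (2 - real d) * ((1/2) ^ k) ^ d = 2 ^ (d - 2) * (1/4) ^ k"
proof -
  obtain N where d: "d = N + 2"
    using assms le_Suc_ex by (metis add.commute)
  have "((1/2::real) ^ Suc k) powr (2 - real d) = 2 ^ (N * Suc k)"
    by (simp add: d powr_minus powr_realpow power_mult power_one_over divide_simps)
       (simp add: power_add power_mult[symmetric] mult.commute)
  moreover have "((1/2::real) ^ k) ^ d = (1/2) ^ (N * k) * (1/4) ^ k"
    by (simp add: d power_add power_mult[symmetric] mult.commute power_mult_distrib[symmetric])
  moreover have "(2::real) ^ (N * Suc k) * (1/2) ^ (N * k) = 2 ^ N"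
    by (simp add: power_add power_one_over)
  ultimately show ?thesis
    by (simp add: d mult.assoc[symmetric])
qed

lemma ball_borel [measurable]: "ball c r \<in> sets borel"
  by simp

definition green_constant :: "'a::euclidean_space itself \<Rightarrow> real" where
  "green_constant _ = Gamma (real DIM('a) / 2 - 1) / (2 * pi powr (real DIM('a) / 2))"

lemma green_kernel_nonzero:
  "(z::'a::euclidean_space) \<noteq> 0 \<Longrightarrow>
    green_kernel z = ennreal (green_constant TYPE('a) * norm z powr (2 - real DIM('a)))"
  by (simp add: green_kernel_def green_constant_def)

lemma green_kernel_0 [simp]: "green_kernel 0 = \<infinity>"
  by (simp add: green_kernel_def)

lemma green_constant_pos:
  assumes "DIM('a::euclidean_space) \<ge> 3"
  shows "green_constant TYPE('a) > 0"
  using Gamma_real_pos[of "real DIM('a) / 2 - 1"] assms by (simp add: green_constant_def)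

lemma borel_measurable_green_kernel [measurable]:
  "green_kernel \<in> borel_measurable (borel :: 'a::euclidean_space measure)"
  unfolding green_kernel_def[abs_def] by measurable

lemma green_kernel_scaleR:
  assumes "r > 0"
  shows "green_kernel (r *\<^sub>R z) = ennreal (r powr (2 - real DIM('a))) * green_kernel (z::'a::euclidean_space)"
proof (cases "z = 0")
  case False
  then show ?thesis
    using assms by (simp add: green_kernel_nonzero powr_mult ennreal_mult'[symmetric] mult_ac)
qed (use assms in \<open>simp add: ennreal_mult_top\<close>)

lemma green_kernel_ge:
  assumes "DIM('a::euclidean_space) \<ge> 3" "norm (z::'a) \<le> t" "t > 0"
  shows "ennreal (green_constant TYPE('a) * t powr (2 - real DIM('a))) \<le> green_kernel z"
proof (cases "z = 0")
  case False
  then have "t powr (2 - real DIM('a)) \<le> norm z powr (2 - real DIM('a))"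
    using assms by (intro powr_mono2') auto
  then show ?thesis
    using False green_constant_pos[OF assms(1)] by (simp add: green_kernel_nonzero ennreal_leI)
qed simp

lemma green_kernel_le:
  assumes "DIM('a::euclidean_space) \<ge> 3" "t \<le> norm (z::'a)" "t > 0"
  shows "green_kernel z \<le> ennreal (green_constant TYPE('a) * t powr (2 - real DIM('a)))"
proof -
  have "z \<noteq> 0" "norm z powr (2 - real DIM('a)) \<le> t powr (2 - real DIM('a))"
    using assms by (auto intro: powr_mono2')
  then show ?thesis
    using green_constant_pos[OF assms(1)] by (simp add: green_kernel_nonzero ennreal_leI)
qed

lemma tendsto_green_kernel:
  assumes "z \<noteq> 0" and lim: "(f \<longlongrightarrow> z) F"
  shows "((\<lambda>x. green_kernel (f x)) \<longlongrightarrow> green_kernel (z::'a::euclidean_space)) F"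
proof -
  let ?g = "\<lambda>x. ennreal (green_constant TYPE('a) * norm (f x) powr (2 - real DIM('a)))"
  have "(?g \<longlongrightarrow> green_kernel z) F"
    using assms by (auto simp: green_kernel_nonzero intro!: tendsto_ennrealI tendsto_intros)
  moreover have "eventually (\<lambda>x. ?g x = green_kernel (f x)) F"
    using tendsto_imp_eventually_ne[OF lim assms(1)] by eventually_elim (simp add: green_kernel_nonzero)
  ultimately show ?thesis
    by (rule Lim_transform_eventually)
qed

definition unit_ball_potential :: "'a::euclidean_space \<Rightarrow> ennreal" where
  "unit_ball_potential w = (\<integral>\<^sup>+u. indicator (ball 0 1) u * green_kernel (u - w) \<partial>lborel)"

lemma borel_measurable_unit_ball_potential [measurable]:
  "unit_ball_potential \<in> borel_measurable (borel :: 'a::euclidean_space measure)"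
proof -
  have "(\<lambda>(w, u). indicator (ball 0 1) u * green_kernel (u - w)) \<in> borel_measurable (borel \<Otimes>\<^sub>M lborel)"
    by (rule measurable_pair_sets_borel) (simp_all, measurable)
  from lborel.borel_measurable_nn_integral[OF this] show ?thesis
    by (simp add: unit_ball_potential_def[abs_def])
qed

lemma nn_integral_ball_green_kernel:
  fixes y :: "'a::euclidean_space"
  assumes r: "r > 0"
  shows "(\<integral>\<^sup>+x. indicator (ball 0 r) x * green_kernel (x - y) \<partial>lborel) =
    ennreal (r\<^sup>2) * unit_ball_potential ((1/r) *\<^sub>R y)"
proof -
  have "r ^ DIM('a) * r powr (2 - real DIM('a)) = r powr (real DIM('a) + (2 - real DIM('a)))"
    using r by (simp only: powr_add powr_realpow)
  also have "\<dots> = r\<^sup>2"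
    using r by (simp add: powr_realpow)
  finally have exponents: "ennreal (r ^ DIM('a)) * ennreal (r powr (2 - real DIM('a))) = ennreal (r\<^sup>2)"
    using r by (simp add: ennreal_mult'[symmetric] powr_realpow)
  have rescale: "indicator (ball 0 r) (r *\<^sub>R x) * green_kernel (r *\<^sub>R x - y) =
      ennreal (r powr (2 - real DIM('a))) * (indicator (ball 0 1) x * green_kernel (x - (1/r) *\<^sub>R y))"
    for x :: 'a
    using green_kernel_scaleR[OF r, of "x - (1/r) *\<^sub>R y"] r
    by (simp add: indicator_def scaleR_diff_right mult_ac)
  have "(\<integral>\<^sup>+x. indicator (ball 0 r) x * green_kernel (x - y) \<partial>lborel) =
      ennreal (r ^ DIM('a)) * (\<integral>\<^sup>+x. indicator (ball 0 r) (r *\<^sub>R x) * green_kernel (r *\<^sub>R x - y) \<partial>lborel)"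
    using nn_integral_lborel_affine[of "\<lambda>x. indicator (ball 0 r) x * green_kernel (x - y)" r 0] r
    by (simp del: mem_ball)
  also have "\<dots> = ennreal (r ^ DIM('a)) *
      (ennreal (r powr (2 - real DIM('a))) * unit_ball_potential ((1/r) *\<^sub>R y))"
    unfolding rescale unit_ball_potential_def by (subst nn_integral_cmult) auto
  also have "\<dots> = ennreal (r\<^sup>2) * unit_ball_potential ((1/r) *\<^sub>R y)"
    by (simp only: mult.assoc[symmetric] exponents)
  finally show ?thesis .
qed

lemma unit_ball_potential_eq_shifted_ball:
  "unit_ball_potential w = (\<integral>\<^sup>+z. indicator (ball (-w) 1) z * green_kernel z \<partial>lborel)"
proof -
  have "indicator (ball 0 1) (w + z) = (indicator (ball (-w) 1) z :: ennreal)" for z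
    by (simp add: indicator_def dist_norm add.commute)
  then show ?thesis
    using nn_integral_lborel_affine[of "\<lambda>u. indicator (ball 0 1) u * green_kernel (u - w)" 1 w]
    by (simp add: unit_ball_potential_def del: mem_ball)
qed

(* The bathtub principle: g is radially decreasing, so of all unit balls the one centred
   at the singularity carries the largest integral of g. *)
lemma unit_ball_potential_le_0:
  assumes "DIM('a::euclidean_space) \<ge> 3"
  shows "unit_ball_potential (w::'a) \<le> unit_ball_potential (0::'a)"
  unfolding unit_ball_potential_eq_shifted_ball[of w] unit_ball_potential_eq_shifted_ball[of 0] minus_zero
proof (rule nn_integral_bathtub[of green_kernel lborel _ _ "ennreal (green_constant TYPE('a))"])
  show "ennreal (green_constant TYPE('a)) \<le> green_kernel z" if "z \<in> ball 0 1" for z :: 'a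
    using green_kernel_ge[OF assms, of z 1] that by simp
  show "green_kernel z \<le> ennreal (green_constant TYPE('a))" if "z \<notin> ball 0 1" for z :: 'a
    using green_kernel_le[OF assms, of 1 z] that by simp
qed (auto simp: emeasure_ball)

lemma unit_ball_potential_0_pos:
  assumes "DIM('a::euclidean_space) \<ge> 3"
  shows "unit_ball_potential (0::'a) > 0"
proof -
  have "0 < ennreal (green_constant TYPE('a)) * emeasure lborel (ball (0::'a) 1)"
    using green_constant_pos[OF assms] unit_ball_vol_pos[of "real DIM('a)"]
    by (simp add: emeasure_ball ennreal_mult[symmetric])
  also have "\<dots> = (\<integral>\<^sup>+u. ennreal (green_constant TYPE('a)) * indicator (ball (0::'a) 1) u \<partial>lborel)"
    by (subst nn_integral_cmult_indicator) auto
  also have "\<dots> \<le> unit_ball_potential (0::'a)"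
    unfolding unit_ball_potential_def
    by (intro nn_integral_mono) (auto simp: indicator_def intro!: green_kernel_ge[OF assms, of _ 1, simplified])
  finally show ?thesis .
qed

lemma green_kernel_le_dyadic_sum:
  assumes "DIM('a::euclidean_space) \<ge> 3" "(u::'a) \<noteq> 0"
  shows "indicator (ball 0 1) u * green_kernel u \<le>
    (\<Sum>k. indicator (ball 0 ((1/2) ^ k)) u *
      ennreal (green_constant TYPE('a) * ((1/2) ^ Suc k) powr (2 - real DIM('a))))"
    (is "_ \<le> suminf ?s")
proof (cases "norm u < 1")
  case True
  then obtain k where k: "(1/2) ^ Suc k \<le> norm u" "norm u < (1/2) ^ k"
    using exists_dyadic_interval[of "norm u"] assms(2) by auto
  then have "indicator (ball 0 1) u * green_kernel u \<le> ?s k"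
    using True green_kernel_le[OF assms(1) k(1)] by simp
  also have "\<dots> \<le> suminf ?s"
    by (rule ennreal_le_suminf)
  finally show ?thesis .
qed simp

(* On the shell 2^-(k+1) <= |u| < 2^-k the kernel is of order 2^(k(d-2)), while the ball of
   radius 2^-k has volume of order 2^(-kd): the dyadic majorant integrates to a geometric
   series of ratio 1/4. *)
lemma unit_ball_potential_0_finite:
  assumes d: "DIM('a::euclidean_space) \<ge> 3"
  shows "unit_ball_potential (0::'a) < \<infinity>"
proof -
  define a where "a k = green_constant TYPE('a) * ((1/2) ^ Suc k) powr (2 - real DIM('a))" for k
  define c where "c = green_constant TYPE('a) * unit_ball_vol (real DIM('a)) * 2 ^ (DIM('a) - 2)"
  have "c \<ge> 0" "a k \<ge> 0" for k
    using green_constant_pos[OF d] unit_ball_vol_pos[of "real DIM('a)"] by (simp_all add: c_def a_def)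
  have two: "2 \<le> DIM('a)"
    using d by simp
  have shell: "ennreal (a k) * emeasure lborel (ball (0::'a) ((1/2) ^ k)) = ennreal (c * (1/4) ^ k)" for k
  proof -
    have "a k * (unit_ball_vol (real DIM('a)) * ((1/2) ^ k) ^ DIM('a)) =
        green_constant TYPE('a) * unit_ball_vol (real DIM('a)) *
        (((1/2) ^ Suc k) powr (2 - real DIM('a)) * ((1/2) ^ k) ^ DIM('a))"
      by (simp only: a_def ac_simps)
    also have "\<dots> = c * (1/4) ^ k"
      unfolding dyadic_power_product[OF two] c_def by (rule mult.assoc[symmetric])
    finally show ?thesis
      using \<open>a k \<ge> 0\<close> by (simp add: emeasure_ball ennreal_mult'[symmetric])
  qed
  have "unit_ball_potential (0::'a) \<le>
      (\<integral>\<^sup>+u. (\<Sum>k. indicator (ball (0::'a) ((1/2) ^ k)) u * ennreal (a k)) \<partial>lborel)"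
    unfolding unit_ball_potential_def a_def
    by (intro nn_integral_mono_AE eventually_mono[OF AE_lborel_singleton[of 0]])
       (simp only: diff_zero, erule green_kernel_le_dyadic_sum[OF d])
  also have "\<dots> = (\<Sum>k. ennreal (c * (1/4) ^ k))"
    by (subst nn_integral_suminf) (auto simp: mult.commute[of "indicator _ _" "ennreal _"]
        nn_integral_cmult_indicator shell simp del: mem_ball)
  also have "\<dots> = ennreal (\<Sum>k. c * (1/4) ^ k)"
    using \<open>c \<ge> 0\<close> by (intro suminf_ennreal2 summable_mult summable_geometric) auto
  finally show ?thesis
    unfolding infinity_ennreal_def by (rule le_less_trans[OF _ ennreal_less_top])
qed

lemma unit_ball_potential_0_le_liminf:
  fixes w :: "nat \<Rightarrow> 'a::euclidean_space"
  assumes "w \<longlonglongrightarrow> 0"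
  shows "unit_ball_potential (0::'a) \<le> liminf (\<lambda>N. unit_ball_potential (w N))"
proof -
  have pointwise: "indicator (ball 0 1) u * green_kernel u =
      liminf (\<lambda>N. indicator (ball 0 1) u * green_kernel (u - w N))" if "u \<noteq> 0" for u
  proof -
    have "(\<lambda>N. u - w N) \<longlonglongrightarrow> u"
      using tendsto_diff[OF tendsto_const assms, of u] by simp
    then have "(\<lambda>N. green_kernel (u - w N)) \<longlonglongrightarrow> green_kernel u"
      by (rule tendsto_green_kernel[OF that])
    then have "liminf (\<lambda>N. green_kernel (u - w N)) = green_kernel u"
      by (intro lim_imp_Liminf) simp_all
    then show ?thesis
      by (subst Liminf_ennreal_mult_left) (auto simp: indicator_def)
  qed
  have "unit_ball_potential (0::'a) =
      (\<integral>\<^sup>+u. liminf (\<lambda>N. indicator (ball 0 1) u * green_kernel (u - w N)) \<partial>lborel)"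
    unfolding unit_ball_potential_def
    by (intro nn_integral_cong_AE eventually_mono[OF AE_lborel_singleton[of 0]]) (simp add: pointwise)
  also have "\<dots> \<le> liminf (\<lambda>N. unit_ball_potential (w N))"
    unfolding unit_ball_potential_def by (rule nn_integral_liminf) measurable
  finally show ?thesis .
qed

context
  fixes \<nu> :: "'a::euclidean_space measure"
  assumes sets_\<nu>: "sets \<nu> = sets borel" and sigma_finite_\<nu>: "sigma_finite_measure \<nu>"
begin

lemma borel_measurable_green_potential [measurable]:
  "green_potential \<nu> \<in> borel_measurable borel"
proof -
  have "(\<lambda>(x, y). green_kernel (x - y)) \<in> borel_measurable (borel \<Otimes>\<^sub>M \<nu>)"
    by (rule measurable_pair_sets_borel) (simp_all add: sets_\<nu>, measurable)
  from sigma_finite_measure.borel_measurable_nn_integral[OF sigma_finite_\<nu> this] show ?thesis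
    by (simp add: green_potential_def[abs_def])
qed

lemma nn_integral_ball_green_potential:
  assumes r: "r > 0"
  shows "(\<integral>\<^sup>+x. indicator (ball 0 r) x * green_potential \<nu> x \<partial>lborel) =
    ennreal (r\<^sup>2) * (\<integral>\<^sup>+y. unit_ball_potential ((1/r) *\<^sub>R y) \<partial>\<nu>)"
proof -
  interpret pair_sigma_finite lborel \<nu>
    using sigma_finite_\<nu> by (simp add: pair_sigma_finite_def lborel.sigma_finite_measure_axioms)
  have [measurable]: "(\<lambda>(x, y). indicator (ball 0 r) x * green_kernel (x - y)) \<in> borel_measurable (lborel \<Otimes>\<^sub>M \<nu>)"
    by (rule measurable_pair_sets_borel) (simp_all add: sets_\<nu>, measurable)
  have "(\<integral>\<^sup>+x. indicator (ball 0 r) x * green_potential \<nu> x \<partial>lborel) =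
      (\<integral>\<^sup>+x. (\<integral>\<^sup>+y. indicator (ball 0 r) x * green_kernel (x - y) \<partial>\<nu>) \<partial>lborel)"
    unfolding green_potential_def
    by (intro nn_integral_cong nn_integral_cmult[symmetric]) (simp add: measurable_cong_sets[OF sets_\<nu> refl])
  also have "\<dots> = (\<integral>\<^sup>+y. (\<integral>\<^sup>+x. indicator (ball 0 r) x * green_kernel (x - y) \<partial>lborel) \<partial>\<nu>)"
    by (rule Fubini'[symmetric]) simp
  also have "\<dots> = ennreal (r\<^sup>2) * (\<integral>\<^sup>+y. unit_ball_potential ((1/r) *\<^sub>R y) \<partial>\<nu>)"
    using r by (simp add: nn_integral_ball_green_kernel nn_integral_cmult measurable_cong_sets[OF sets_\<nu> refl])
  finally show ?thesis .
qed

lemma nn_integral_unit_ball_potential_le: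
  assumes "DIM('a) \<ge> 3"
  shows "(\<integral>\<^sup>+y. unit_ball_potential (c *\<^sub>R y) \<partial>\<nu>) \<le> unit_ball_potential (0::'a) * emeasure \<nu> UNIV"
proof -
  have "(\<integral>\<^sup>+y. unit_ball_potential (c *\<^sub>R y) \<partial>\<nu>) \<le> (\<integral>\<^sup>+y. unit_ball_potential (0::'a) \<partial>\<nu>)"
    by (intro nn_integral_mono unit_ball_potential_le_0[OF assms])
  also have "\<dots> = unit_ball_potential (0::'a) * emeasure \<nu> UNIV"
    using sets_eq_imp_space_eq[OF sets_\<nu>] by simp
  finally show ?thesis .
qed

end

lemma nn_integral_unit_ball_potential_le_liminf:
  fixes \<mu> :: "'a::euclidean_space measure" and \<mu>s :: "nat \<Rightarrow> 'a measure"
  assumes d: "DIM('a) \<ge> 3"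
    and sets: "sets \<mu> = sets borel" "\<And>n. sets (\<mu>s n) = sets borel"
    and sigma_finite: "sigma_finite_measure \<mu>" "\<And>n. sigma_finite_measure (\<mu>s n)"
    and potential_le: "\<And>x. green_potential \<mu> x \<le> liminf (\<lambda>n. green_potential (\<mu>s n) x)"
    and r: "r > 0"
  shows "(\<integral>\<^sup>+y. unit_ball_potential ((1/r) *\<^sub>R y) \<partial>\<mu>) \<le>
    unit_ball_potential (0::'a) * liminf (\<lambda>n. emeasure (\<mu>s n) UNIV)"
proof -
  let ?U0 = "unit_ball_potential (0::'a)"
  have r2: "ennreal (r\<^sup>2) \<noteq> 0" "ennreal (r\<^sup>2) < \<infinity>"
    using r by simp_all
  note [measurable] = borel_measurable_green_potential[OF sets(2) sigma_finite(2)]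
  have "ennreal (r\<^sup>2) * (\<integral>\<^sup>+y. unit_ball_potential ((1/r) *\<^sub>R y) \<partial>\<mu>) =
      (\<integral>\<^sup>+x. indicator (ball 0 r) x * green_potential \<mu> x \<partial>lborel)"
    by (rule nn_integral_ball_green_potential[OF sets(1) sigma_finite(1) r, symmetric])
  also have "\<dots> \<le> (\<integral>\<^sup>+x. liminf (\<lambda>n. indicator (ball 0 r) x * green_potential (\<mu>s n) x) \<partial>lborel)"
    by (intro nn_integral_mono)
       (simp add: Liminf_ennreal_mult_left indicator_def mult_left_mono potential_le)
  also have "\<dots> \<le> liminf (\<lambda>n. \<integral>\<^sup>+x. indicator (ball 0 r) x * green_potential (\<mu>s n) x \<partial>lborel)"
    by (rule nn_integral_liminf) measurable
  also have "\<dots> = liminf (\<lambda>n. ennreal (r\<^sup>2) * (\<integral>\<^sup>+y. unit_ball_potential ((1/r) *\<^sub>R y) \<partial>\<mu>s n))"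
    by (simp add: nn_integral_ball_green_potential[OF sets(2) sigma_finite(2) r])
  also have "\<dots> \<le> liminf (\<lambda>n. ennreal (r\<^sup>2) * (?U0 * emeasure (\<mu>s n) UNIV))"
    by (intro Liminf_mono always_eventually allI mult_left_mono
        nn_integral_unit_ball_potential_le[OF sets(2) sigma_finite(2) d]) simp
  also have "\<dots> = ennreal (r\<^sup>2) * (?U0 * liminf (\<lambda>n. emeasure (\<mu>s n) UNIV))"
    using r2 unit_ball_potential_0_finite[OF d] by (simp add: Liminf_ennreal_mult_left ennreal_mult_less_top)
  finally show ?thesis
    using r2 by (simp add: ennreal_mult_le_mult_iff)
qed

theorem mainTheorem3:
  fixes \<mu> :: "'a::euclidean_space measure" and \<mu>s :: "nat \<Rightarrow> 'a measure"
  assumes "DIM('a) \<ge> 3"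
    and "sets \<mu> = sets borel"
    and "\<And>n. sets (\<mu>s n) = sets borel"
    and "sigma_finite_measure \<mu>"
    and "\<And>n. sigma_finite_measure (\<mu>s n)"
    and "\<And>x. liminf (\<lambda>n. green_potential (\<mu>s n) x) \<ge> green_potential \<mu> x"
  shows "liminf (\<lambda>n. emeasure (\<mu>s n) UNIV) \<ge> emeasure \<mu> UNIV"
proof -
  let ?U = "unit_ball_potential :: 'a \<Rightarrow> ennreal" and ?L = "liminf (\<lambda>n. emeasure (\<mu>s n) UNIV)"
  have shrink: "(\<lambda>N. (1 / real (Suc N)) *\<^sub>R y) \<longlonglongrightarrow> 0" for y :: 'a
    using tendsto_scaleR[OF LIMSEQ_Suc[OF lim_1_over_n] tendsto_const, of y] by simp
  have "?U 0 * emeasure \<mu> UNIV = (\<integral>\<^sup>+y. ?U 0 \<partial>\<mu>)"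
    using sets_eq_imp_space_eq[OF assms(2)] by simp
  also have "\<dots> \<le> (\<integral>\<^sup>+y. liminf (\<lambda>N. ?U ((1 / real (Suc N)) *\<^sub>R y)) \<partial>\<mu>)"
    by (intro nn_integral_mono unit_ball_potential_0_le_liminf shrink)
  also have "\<dots> \<le> liminf (\<lambda>N. \<integral>\<^sup>+y. ?U ((1 / real (Suc N)) *\<^sub>R y) \<partial>\<mu>)"
    by (rule nn_integral_liminf) (simp add: measurable_cong_sets[OF assms(2) refl])
  also have "\<dots> \<le> ?U 0 * ?L"
    by (intro Liminf_le always_eventually allI nn_integral_unit_ball_potential_le_liminf[OF assms]) simp_all
  finally show ?thesis
    using unit_ball_potential_0_pos[OF assms(1)] unit_ball_potential_0_finite[OF assms(1)]
    by (simp add: ennreal_mult_le_mult_iff)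
qed

end
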